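(* Let $X$ be a fixed $n\times n$ matrix and set $$Z=\sum_{a,b}X_{ab}\,\langle\mathcal{P}_T(e_ae_b^* ),e_ae_b^*\rangle\,e_ae_b^* .$$ Then $\|Z\|\le\frac{2\mu_0r}{n}\|X\|$.
   Context: $U,V\subseteq\mathbb{R}^n$ are $r$-dimensional subspaces with orthogonal projections $P_U,P_V$, with coherences $\mu(U),\mu(V)\le\mu_0$, where $\mu(W)=\frac nr\max_i\|P_We_i\|^2$. $\mathcal{P}_T(Y)=P_UY+YP_V-P_UYP_V$. $e_a$ are standard basis vectors, $\langle A,B\rangle=\mathrm{trace}(A^*B)$, and $\|\cdot\|$ is the spectral norm. *)

theory Defs
  imports "HOL-Analysis.Analysis"
begin

definition is_orth_proj :: "(real^'n) set \<Rightarrow> real^'n^'n \<Rightarrow> bool" where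
  "is_orth_proj W P \<longleftrightarrow>
     (\<forall>x. P *v x \<in> W \<and> (\<forall>w\<in>W. (x - P *v x) \<bullet> w = 0))"

definition coherence :: "(real^'n) set \<Rightarrow> real^'n^'n \<Rightarrow> real" where
  "coherence W P = real CARD('n) / real (dim W) *
      Max (range (\<lambda>i::'n. (norm (P *v axis i 1))\<^sup>2))"

definition unit_mat :: "'n \<Rightarrow> 'n \<Rightarrow> real^'n^'n" where
  "unit_mat a b = (\<chi> i j. if i = a \<and> j = b then 1 else 0)"

definition mat_inner :: "real^'n^'n \<Rightarrow> real^'n^'n \<Rightarrow> real" where
  "mat_inner A B = trace (transpose A ** B)"

definition PT :: "real^'n^'n \<Rightarrow> real^'n^'n \<Rightarrow> real^'n^'n \<Rightarrow> real^'n^'n" where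
  "PT PU PV Y = PU ** Y + Y ** PV - PU ** Y ** PV"

definition spec_norm :: "real^'n^'n \<Rightarrow> real" where
  "spec_norm A = onorm (\<lambda>x. A *v x)"

end

theory Submission
  imports Defs
begin

(* Let u a = (P_U)_aa and v b = (P_V)_bb be the diagonals of the two projections.
   Since <P_T(e_a e_b^T), e_a e_b^T> = u a + v b - u a * v b, the matrix Z is the
   entrywise (Schur) product of X with the weights u a + v b - u a * v b, i.e.
     Z = D_u X + D_{1-u} X D_v      (D_w the diagonal matrix with entries w).
   The diagonal of an orthogonal projection satisfies 0 <= P_aa = ||P e_a||^2 <= 1,
   and the coherence hypothesis gives P_aa <= mu0 r / n.  Hence ||D_u|| <= mu0 r/n,
   ||D_{1-u}|| <= 1, ||D_v|| <= mu0 r/n, and the triangle inequality gives the bound. *)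

lemma axis_inner_mat_axis: "axis a 1 \<bullet> (P *v axis a 1) = (P :: real^'n^'n)$a$a"
proof -
  have "axis a 1 \<bullet> (P *v axis a 1) = (P *v axis a 1) $ a"
    by (simp add: inner_axis')
  also have "\<dots> = P$a$a"
    by (simp add: matrix_vector_mult_def axis_def if_distrib cong: if_cong)
  finally show ?thesis .
qed

lemma orth_proj_diag_eq_norm_sq:
  assumes "is_orth_proj W P"
  shows "P$a$a = (norm (P *v axis a 1))\<^sup>2"
proof -
  let ?e = "axis a (1::real)" and ?p = "P *v axis a (1::real)"
  have "(?e - ?p) \<bullet> ?p = 0"
    using assms unfolding is_orth_proj_def by auto
  then have "?e \<bullet> ?p = (norm ?p)\<^sup>2"
    by (simp add: inner_diff_left power2_norm_eq_inner)
  then show ?thesis using axis_inner_mat_axis[of a P] by simp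
qed

text \<open>Hence 0 <= P_aa <= 1: from ||Pe||^2 = e . Pe <= ||Pe|| by Cauchy-Schwarz.\<close>
lemma orth_proj_diag_unit_interval:
  assumes "is_orth_proj W P"
  shows "0 \<le> P$a$a" and "P$a$a \<le> 1"
proof -
  let ?p = "P *v axis a (1::real)"
  have diag: "P$a$a = (norm ?p)\<^sup>2"
    by (rule orth_proj_diag_eq_norm_sq[OF assms])
  then show "0 \<le> P$a$a" by simp
  have "(norm ?p)\<^sup>2 = axis a 1 \<bullet> ?p"
    using diag axis_inner_mat_axis[of a P] by linarith
  also have "\<dots> \<le> norm ?p"
    using norm_cauchy_schwarz[of "axis a 1" ?p] by simp
  finally have "norm ?p \<le> 1"
    by (cases "norm ?p = 0") (auto simp: power2_eq_square)
  then show "P$a$a \<le> 1"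
    using diag by (simp add: power_le_one)
qed

text \<open>Coherence bound: P_aa <= coherence(W) dim(W) / n.  If dim W = 0 then W = {0},
  so P e_a = 0 and both sides vanish.\<close>
lemma orth_proj_diag_le_coherence:
  fixes P :: "real^'n^'n"
  assumes "is_orth_proj W P"
  shows "P$a$a \<le> coherence W P * real (dim W) / real CARD('n)"
proof (cases "dim W = 0")
  case True
  then have "W \<subseteq> {0}" by simp
  moreover have "P *v axis a 1 \<in> W"
    using assms unfolding is_orth_proj_def by auto
  ultimately have "P *v axis a 1 = 0" by auto
  then show ?thesis
    using orth_proj_diag_eq_norm_sq[OF assms, of a] by (simp add: True)
next
  case False
  have "(norm (P *v axis a 1))\<^sup>2 \<le> Max (range (\<lambda>i::'n. (norm (P *v axis i 1))\<^sup>2))"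
    by (rule Max_ge) auto
  then show ?thesis
    using False orth_proj_diag_eq_norm_sq[OF assms, of a]
    by (simp add: coherence_def field_simps)
qed

lemma unit_mat_nth: "unit_mat a b $ i $ j = (if i = a \<and> j = b then 1 else 0)"
  by (simp add: unit_mat_def)

lemma mult_unit_mat: "((A::real^'n^'m) ** unit_mat a b) $ i $ j = (if j = b then A$i$a else 0)"
  by (cases "j = b")
     (simp_all add: matrix_matrix_mult_def unit_mat_nth mult.commute[of "A $ i $ _"] mult_if_delta)

lemma unit_mat_mult: "(unit_mat a b ** (A::real^'m^'n)) $ i $ j = (if i = a then A$b$j else 0)"
  by (cases "i = a") (simp_all add: matrix_matrix_mult_def unit_mat_nth mult_if_delta)

lemma unit_mat_sandwich:
  "((A::real^'n^'m) ** unit_mat a b ** (B::real^'k^'n)) $ i $ j = A$i$a * B$b$j"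
proof -
  have "(A ** unit_mat a b ** B) $ i $ j = (\<Sum>k\<in>UNIV. (if k = b then A$i$a else 0) * B$k$j)"
    by (simp add: matrix_matrix_mult_def[of "A ** unit_mat a b"] mult_unit_mat)
  also have "\<dots> = (\<Sum>k\<in>UNIV. if k = b then A$i$a * B$k$j else 0)"
    by (rule sum.cong) simp_all
  finally show ?thesis by simp
qed

lemma mat_inner_unit_mat: "mat_inner M (unit_mat a b) = M$a$b"
  by (simp add: mat_inner_def trace_def mult_unit_mat transpose_def)

lemma PT_unit_mat_weight:
  "mat_inner (PT PU PV (unit_mat a b)) (unit_mat a b) = PU$a$a + PV$b$b - PU$a$a * PV$b$b"
  by (simp add: mat_inner_unit_mat PT_def mult_unit_mat unit_mat_mult unit_mat_sandwich)

lemma sum_unit_mat: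
  fixes f :: "'n::finite \<Rightarrow> 'n \<Rightarrow> real"
  shows "(\<Sum>a\<in>UNIV. \<Sum>b\<in>UNIV. f a b *\<^sub>R unit_mat a b) = (\<chi> i j. f i j)"
proof -
  have "(\<Sum>b\<in>UNIV. f a b * unit_mat a b $ i $ j) = (if i = a then f a j else 0)" for i j a
    by (cases "i = a") (simp_all add: unit_mat_nth mult.commute[of "f a _"] mult_if_delta)
  then show ?thesis by (simp add: vec_eq_iff)
qed

lemma spec_norm_nonneg: "0 \<le> spec_norm A"
  unfolding spec_norm_def by (rule onorm_pos_le) simp

lemma spec_norm_bound: "norm (A *v x) \<le> spec_norm A * norm x"
  unfolding spec_norm_def by (rule onorm) simp

lemma norm_diag_scaling:
  fixes z :: "real^'n"
  assumes "\<And>i. \<bar>d i\<bar> \<le> c"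
  shows "norm (\<chi> i. d i * z$i) \<le> c * norm z"
proof -
  have c: "0 \<le> c" using assms[of undefined] by linarith
  have "norm (\<chi> i. d i * z$i) \<le> norm (c *\<^sub>R z)"
    by (rule norm_le_componentwise_cart)
       (use assms c in \<open>simp add: abs_mult mult_right_mono\<close>)
  then show ?thesis using c by simp
qed

text \<open>The Schur multiplier with weights u_i + v_j - u_i v_j, where 0 <= u_i <= min 1 c and
  |v_j| <= c, has norm at most 2c, because it acts as X |-> D_u X + D_(1-u) X D_v.\<close>
lemma spec_norm_schur_weight_le:
  fixes X :: "real^'n^'n"
  assumes u: "\<And>i. 0 \<le> u i" "\<And>i. u i \<le> 1" "\<And>i. u i \<le> c"
    and v: "\<And>j. \<bar>v j\<bar> \<le> c"
  shows "spec_norm (\<chi> i j. X$i$j * (u i + v j - u i * v j)) \<le> 2 * c * spec_norm X"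
  unfolding spec_norm_def
proof (rule onorm_le)
  fix x :: "real^'n"
  let ?Z = "\<chi> i j. X$i$j * (u i + v j - u i * v j)"
  define y where "y = (\<chi> j. v j * x$j)"
  have split: "?Z *v x = (\<chi> i. u i * (X *v x)$i) + (\<chi> i. (1 - u i) * (X *v y)$i)"
    by (simp add: vec_eq_iff matrix_vector_mult_def y_def sum_distrib_left
        sum.distrib[symmetric] algebra_simps)
  have c: "0 \<le> c" using u(1,3)[of undefined] by linarith
  have y: "norm y \<le> c * norm x"
    unfolding y_def by (rule norm_diag_scaling) (rule v)
  have "norm (?Z *v x) \<le> norm (\<chi> i. u i * (X *v x)$i) + norm (\<chi> i. (1 - u i) * (X *v y)$i)"
    unfolding split by (rule norm_triangle_ineq)
  also have "\<dots> \<le> c * norm (X *v x) + 1 * norm (X *v y)"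
    by (intro add_mono norm_diag_scaling) (use u in auto)
  also have "\<dots> \<le> c * (spec_norm X * norm x) + spec_norm X * (c * norm x)"
    using spec_norm_bound[of X x] spec_norm_bound[of X y] spec_norm_nonneg[of X] c y
    by (intro add_mono) (auto intro: mult_left_mono order_trans)
  finally show "norm (?Z *v x) \<le> 2 * c * onorm (\<lambda>x. X *v x) * norm x"
    by (simp add: spec_norm_def algebra_simps)
qed

theorem lemma6p3:
  fixes U V :: "(real^'n) set" and PU PV X :: "real^'n^'n"
    and r :: nat and \<mu>0 :: real
  assumes "subspace U" and "subspace V"
    and "dim U = r" and "dim V = r"
    and "is_orth_proj U PU" and "is_orth_proj V PV"
    and "coherence U PU \<le> \<mu>0" and "coherence V PV \<le> \<mu>0"
  shows "spec_norm (\<Sum>a\<in>UNIV. \<Sum>b\<in>UNIV.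
            (X $ a $ b * mat_inner (PT PU PV (unit_mat a b)) (unit_mat a b)) *\<^sub>R unit_mat a b)
         \<le> 2 * \<mu>0 * real r / real CARD('n) * spec_norm X"
proof -
  define c where "c = \<mu>0 * real r / real CARD('n)"
  have coh: "P$a$a \<le> c" if "is_orth_proj W P" "dim W = r" "coherence W P \<le> \<mu>0"
    for W and P :: "real^'n^'n" and a
  proof -
    have "coherence W P * real r / real CARD('n) \<le> c"
      unfolding c_def using that(3) by (simp add: divide_right_mono mult_right_mono)
    then show ?thesis using orth_proj_diag_le_coherence[OF that(1), of a] that(2) by simp
  qed
  have "spec_norm (\<chi> i j. X$i$j * (PU$i$i + PV$j$j - PU$i$i * PV$j$j)) \<le> 2 * c * spec_norm X"
  proof (rule spec_norm_schur_weight_le)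
    show "\<bar>PV$j$j\<bar> \<le> c" for j
      using orth_proj_diag_unit_interval(1)[OF assms(6)] coh[OF assms(6,4,8)] by simp
  qed (use orth_proj_diag_unit_interval[OF assms(5)] coh[OF assms(5,3,7)] in auto)
  then show ?thesis
    by (simp add: PT_unit_mat_weight sum_unit_mat c_def)
qed

end
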